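(* Let $k$ be a positive integer. If $G$ and $G'$ are linear forests with the same number of vertices and the same number of edges, all of whose components have at least $k-1$ vertices, then $\mathcal{D}_k(G)=\mathcal{D}_k(G')$.
   Context: A linear forest is a disjoint union of paths. The $k$-deck $\mathcal{D}_k(G)$ is the multiset of isomorphism classes of the induced subgraphs of $G$ on $k$ vertices. *)

theory Defs
  imports "HOL-Library.Multiset"
begin

definition graph :: "'a set \<Rightarrow> 'a set set \<Rightarrow> bool" where
  "graph V E \<longleftrightarrow> finite V \<and> (\<forall>e\<in>E. e \<subseteq> V \<and> card e = 2)"

definition adj :: "'a set set \<Rightarrow> 'a \<Rightarrow> 'a \<Rightarrow> bool" where
  "adj E x y \<longleftrightarrow> {x, y} \<in> E"

definition component :: "'a set \<Rightarrow> 'a set set \<Rightarrow> 'a \<Rightarrow> 'a set" where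
  "component V E x = {y \<in> V. (adj E)\<^sup>*\<^sup>* x y}"

definition induced :: "'a set set \<Rightarrow> 'a set \<Rightarrow> 'a set set" where
  "induced E S = {e \<in> E. e \<subseteq> S}"

definition is_path :: "'a set \<Rightarrow> 'a set set \<Rightarrow> bool" where
  "is_path V E \<longleftrightarrow> (\<exists>xs. xs \<noteq> [] \<and> distinct xs \<and> set xs = V \<and>
      E = {{xs ! i, xs ! (i + 1)} | i. i + 1 < length xs})"

definition linear_forest :: "'a set \<Rightarrow> 'a set set \<Rightarrow> bool" where
  "linear_forest V E \<longleftrightarrow> graph V E \<and>
     (\<forall>x\<in>V. is_path (component V E x) (induced E (component V E x)))"

definition graph_iso :: "'a set \<Rightarrow> 'a set set \<Rightarrow> 'b set \<Rightarrow> 'b set set \<Rightarrow> bool" where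
  "graph_iso V E W F \<longleftrightarrow> (\<exists>f. bij_betw f V W \<and>
     (\<forall>x\<in>V. \<forall>y\<in>V. {x, y} \<in> E \<longleftrightarrow> {f x, f y} \<in> F))"

text \<open>Isomorphism class of a finite graph, represented as the set of all isomorphic
  graphs on the canonical vertex set {0..<n}.\<close>
definition iso_class :: "'a set \<Rightarrow> 'a set set \<Rightarrow> (nat set \<times> nat set set) set" where
  "iso_class V E = {(W, F). W = {0..<card V} \<and> graph W F \<and> graph_iso V E W F}"

definition deck :: "nat \<Rightarrow> 'a set \<Rightarrow> 'a set set \<Rightarrow> (nat set \<times> nat set set) set multiset" where
  "deck k V E = image_mset (\<lambda>S. iso_class S (induced E S)) (mset_set {S. S \<subseteq> V \<and> card S = k})"

end

theory Submission
  imports Defs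
begin

text \<open>
  A linear forest on n vertices whose components all have at least d vertices is isomorphic
  to the path 0 - 1 - \<dots> - (n-1) with the edges in front of a set Z of cut points removed,
  where consecutive cut points (and the ends 0 and n) are at distance at least d; the number
  of edges is n - 1 - |Z|. For k \<le> d + 1 the k-deck does not change when a single cut point
  is moved by one step: for a k-set T through the moved vertex p, reflecting T about p on
  the smallest window around p whose two boundary points avoid T is an isomorphism between
  the two induced subgraphs, because |T| \<le> d + 1 keeps the window away from all other cuts.
  Moving cuts leftwards reaches the configuration d, 2d, \<dots>, |Z| d, so the deck depends only
  on n and the number of edges.
\<close>

lemma graph_iso_sym:
  assumes "graph_iso V E W F" shows "graph_iso W F V E"
proof -
  obtain f where f: "bij_betw f V W" "\<forall>x\<in>V. \<forall>y\<in>V. {x, y} \<in> E \<longleftrightarrow> {f x, f y} \<in> F"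
    using assms unfolding graph_iso_def by blast
  let ?g = "inv_into V f"
  have "bij_betw ?g W V" using f(1) by (rule bij_betw_inv_into)
  moreover have "\<forall>x\<in>W. \<forall>y\<in>W. {x, y} \<in> F \<longleftrightarrow> {?g x, ?g y} \<in> E"
  proof (intro ballI)
    fix x y assume "x \<in> W" "y \<in> W"
    then have "?g x \<in> V" "?g y \<in> V" "f (?g x) = x" "f (?g y) = y"
      using f(1) by (auto simp: bij_betw_def inv_into_into f_inv_into_f)
    then show "{x, y} \<in> F \<longleftrightarrow> {?g x, ?g y} \<in> E" using f(2) by metis
  qed
  ultimately show ?thesis unfolding graph_iso_def by blast
qed

lemma graph_iso_trans:
  assumes "graph_iso A EA B EB" "graph_iso B EB C EC" shows "graph_iso A EA C EC"
proof -
  obtain f where f: "bij_betw f A B" "\<forall>x\<in>A. \<forall>y\<in>A. {x, y} \<in> EA \<longleftrightarrow> {f x, f y} \<in> EB"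
    using assms(1) unfolding graph_iso_def by blast
  obtain g where g: "bij_betw g B C" "\<forall>x\<in>B. \<forall>y\<in>B. {x, y} \<in> EB \<longleftrightarrow> {g x, g y} \<in> EC"
    using assms(2) unfolding graph_iso_def by blast
  have "bij_betw (g \<circ> f) A C" using f(1) g(1) by (rule bij_betw_trans)
  moreover have "\<forall>x\<in>A. \<forall>y\<in>A. {x, y} \<in> EA \<longleftrightarrow> {(g \<circ> f) x, (g \<circ> f) y} \<in> EC"
    using f g by (auto simp: bij_betw_def)
  ultimately show ?thesis unfolding graph_iso_def by blast
qed

lemma iso_class_eq_if_graph_iso:
  assumes "graph_iso V E W F" shows "iso_class V E = iso_class W F"
proof -
  have "card V = card W" using assms unfolding graph_iso_def by (auto intro: bij_betw_same_card)
  moreover have "graph_iso V E V' E' \<longleftrightarrow> graph_iso W F V' E'" for V' :: "nat set" and E'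
    using graph_iso_trans[OF graph_iso_sym[OF assms]] graph_iso_trans[OF assms] by blast
  ultimately show ?thesis unfolding iso_class_def by simp
qed

lemma graph_iso_induced_image:
  assumes "inj_on f S" and "\<forall>x\<in>S. \<forall>y\<in>S. {x, y} \<in> E \<longleftrightarrow> {f x, f y} \<in> F"
  shows "graph_iso S (induced E S) (f ` S) (induced F (f ` S))"
proof -
  have "bij_betw f S (f ` S)" using assms(1) by (simp add: bij_betw_def)
  moreover have "\<forall>x\<in>S. \<forall>y\<in>S. {x, y} \<in> induced E S \<longleftrightarrow> {f x, f y} \<in> induced F (f ` S)"
    using assms(2) unfolding induced_def by auto
  ultimately show ?thesis unfolding graph_iso_def by blast
qed

lemma image_mset_mset_set_cong:
  assumes "\<And>x. x \<in> K \<Longrightarrow> f x = g x"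
  shows "image_mset f (mset_set K) = image_mset g (mset_set K)"
  using assms by (cases "finite K") (auto intro: image_mset_cong)

lemma deck_eq_if_bij_betw_subsets:
  assumes bij: "bij_betw \<phi> {S. S \<subseteq> V \<and> card S = k} {T. T \<subseteq> W \<and> card T = k}"
    and iso: "\<And>S. S \<subseteq> V \<Longrightarrow> card S = k \<Longrightarrow> graph_iso S (induced E S) (\<phi> S) (induced F (\<phi> S))"
  shows "deck k V E = deck k W F"
proof -
  let ?K = "{S. S \<subseteq> V \<and> card S = k}" and ?L = "{T. T \<subseteq> W \<and> card T = k}"
  have "deck k V E = image_mset (\<lambda>S. iso_class (\<phi> S) (induced F (\<phi> S))) (mset_set ?K)"
    unfolding deck_def
    by (rule image_mset_mset_set_cong) (simp add: iso iso_class_eq_if_graph_iso)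
  also have "\<dots> = image_mset (\<lambda>T. iso_class T (induced F T)) (image_mset \<phi> (mset_set ?K))"
    by (simp add: image_mset.compositionality o_def)
  also have "image_mset \<phi> (mset_set ?K) = mset_set ?L"
    using bij by (simp add: bij_betw_def image_mset_mset_set)
  finally show ?thesis unfolding deck_def .
qed

lemma bij_betw_image_card_subsets:
  assumes "bij_betw f V W"
  shows "bij_betw ((`) f) {S. S \<subseteq> V \<and> card S = k} {T. T \<subseteq> W \<and> card T = k}"
proof (rule bij_betw_subset[OF bij_betw_image_Pow[OF assms]])
  have card_image_eq: "card (f ` S) = card S" if "S \<subseteq> V" for S
    using assms that by (meson bij_betw_imp_inj_on card_image inj_on_subset)
  show "(`) f ` {S. S \<subseteq> V \<and> card S = k} = {T. T \<subseteq> W \<and> card T = k}"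
  proof (intro equalityI subsetI)
    fix T assume "T \<in> (`) f ` {S. S \<subseteq> V \<and> card S = k}"
    then obtain S where "S \<subseteq> V" "card S = k" "T = f ` S" by blast
    then show "T \<in> {T. T \<subseteq> W \<and> card T = k}"
      using assms card_image_eq by (auto simp: bij_betw_def)
  next
    fix T assume "T \<in> {T. T \<subseteq> W \<and> card T = k}"
    then have "T \<subseteq> f ` V" "card T = k" using assms by (auto simp: bij_betw_def)
    then obtain S where "S \<subseteq> V" "T = f ` S" by (meson subset_imageE)
    then show "T \<in> (`) f ` {S. S \<subseteq> V \<and> card S = k}"
      using \<open>card T = k\<close> card_image_eq by auto
  qed
qed auto

lemma deck_eq_if_graph_iso:
  assumes "graph_iso V E W F"
  shows "deck k V E = deck k W F"
proof -
  obtain f where f: "bij_betw f V W" "\<forall>x\<in>V. \<forall>y\<in>V. {x, y} \<in> E \<longleftrightarrow> {f x, f y} \<in> F"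
    using assms unfolding graph_iso_def by blast
  show ?thesis
  proof (rule deck_eq_if_bij_betw_subsets[OF bij_betw_image_card_subsets[OF f(1)]])
    fix S assume "S \<subseteq> V"
    moreover have "inj_on f V" using f(1) by (simp add: bij_betw_def)
    ultimately show "graph_iso S (induced E S) (f ` S) (induced F (f ` S))"
      using f(2) by (intro graph_iso_induced_image) (auto intro: inj_on_subset)
  qed
qed

lemma graph_iso_card_edges:
  assumes "graph V E" "graph W F" "graph_iso V E W F"
  shows "card E = card F"
proof -
  obtain f where f: "bij_betw f V W" "\<forall>x\<in>V. \<forall>y\<in>V. {x, y} \<in> E \<longleftrightarrow> {f x, f y} \<in> F"
    using assms unfolding graph_iso_def by blast
  have edge_E: "\<exists>x\<in>V. \<exists>y\<in>V. e = {x, y}" if "e \<in> E" for e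
    using assms(1) that unfolding graph_def card_2_iff by (metis insert_subset)
  have edge_F: "\<exists>u\<in>W. \<exists>v\<in>W. e = {u, v}" if "e \<in> F" for e
    using assms(2) that unfolding graph_def card_2_iff by (metis insert_subset)
  have "(`) f ` E = F"
  proof (intro equalityI subsetI)
    fix e' assume "e' \<in> (`) f ` E"
    then obtain e where e: "e \<in> E" "e' = f ` e" by blast
    then obtain x y where "x \<in> V" "y \<in> V" "e = {x, y}" using edge_E by blast
    then show "e' \<in> F" using e f(2) by auto
  next
    fix e' assume e': "e' \<in> F"
    then obtain u v where uv: "u \<in> W" "v \<in> W" "e' = {u, v}" using edge_F by blast
    then obtain x y where "x \<in> V" "y \<in> V" "u = f x" "v = f y"
      using f(1) by (auto simp: bij_betw_def)
    then show "e' \<in> (`) f ` E" using f(2) e' uv by (auto intro!: image_eqI[of _ _ "{x, y}"])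
  qed
  moreover have "E \<subseteq> Pow V" using assms(1) unfolding graph_def by auto
  ultimately have "bij_betw ((`) f) E F"
    using bij_betw_subset[OF bij_betw_image_Pow[OF f(1)]] by blast
  then show ?thesis by (rule bij_betw_same_card)
qed

lemma component_self: "x \<in> V \<Longrightarrow> x \<in> component V E x"
  unfolding component_def by simp

lemma component_subset: "component V E x \<subseteq> V"
  unfolding component_def by auto

lemma induced_induced: "C \<subseteq> S \<Longrightarrow> induced (induced E S) C = induced E C"
  unfolding induced_def by auto

lemma edge_in_component_or_outside:
  assumes "graph V E" "e \<in> E"
  shows "e \<subseteq> component V E x \<or> e \<subseteq> V - component V E x"
proof -
  obtain u v where uv: "e = {u, v}" "u \<in> V" "v \<in> V"
    using assms unfolding graph_def card_2_iff by (metis insert_subset)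
  then have "adj E u v" "adj E v u" using assms(2) unfolding adj_def by (auto simp: insert_commute)
  then have "u \<in> component V E x \<longleftrightarrow> v \<in> component V E x"
    using uv unfolding component_def by (auto intro: rtranclp.rtrancl_into_rtrancl)
  then show ?thesis using uv by auto
qed

lemma rtranclp_adj_induced_mono: "(adj (induced E S))\<^sup>*\<^sup>* y z \<Longrightarrow> (adj E)\<^sup>*\<^sup>* y z"
  by (rule rtranclp_mono[THEN predicate2D, rotated]) (auto simp: adj_def induced_def)

lemma rtranclp_adj_outside_component:
  assumes g: "graph V E" and y: "y \<in> V - component V E x"
  shows "(adj E)\<^sup>*\<^sup>* y z \<Longrightarrow> z \<in> V - component V E x \<and>
     (adj (induced E (V - component V E x)))\<^sup>*\<^sup>* y z"
proof (induction rule: rtranclp_induct)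
  case (step z w)
  let ?C = "component V E x"
  have e: "{z, w} \<in> E" using step.hyps(2) unfolding adj_def .
  then have "{z, w} \<subseteq> V - ?C"
    using edge_in_component_or_outside[OF g e, of x] step.IH by auto
  then have "w \<in> V - ?C" "adj (induced E (V - ?C)) z w"
    using e unfolding adj_def induced_def by auto
  then show ?case using step.IH by (auto intro: rtranclp.rtrancl_into_rtrancl)
qed (use y in simp)

lemma component_outside_component:
  assumes "graph V E" and "y \<in> V - component V E x"
  shows "component (V - component V E x) (induced E (V - component V E x)) y = component V E y"
proof
  show "component (V - component V E x) (induced E (V - component V E x)) y \<subseteq> component V E y"
    unfolding component_def using rtranclp_adj_induced_mono by fastforce
  show "component V E y \<subseteq> component (V - component V E x) (induced E (V - component V E x)) y"
    unfolding component_def[of V] using rtranclp_adj_outside_component[OF assms]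
    unfolding component_def by blast
qed

lemma linear_forest_remove_component:
  assumes lf: "linear_forest V E"
  shows "linear_forest (V - component V E x) (induced E (V - component V E x))"
  unfolding linear_forest_def
proof (intro conjI ballI)
  let ?C = "component V E x"
  have g: "graph V E" using lf unfolding linear_forest_def by simp
  then show "graph (V - ?C) (induced E (V - ?C))"
    unfolding graph_def induced_def by auto
  fix y assume y: "y \<in> V - ?C"
  have c: "component (V - ?C) (induced E (V - ?C)) y = component V E y"
    by (rule component_outside_component[OF g y])
  then have "induced (induced E (V - ?C)) (component V E y) = induced E (component V E y)"
    using component_subset by (metis induced_induced)
  then show "is_path (component (V - ?C) (induced E (V - ?C)) y)
      (induced (induced E (V - ?C)) (component (V - ?C) (induced E (V - ?C)) y))"
    using c lf y unfolding linear_forest_def by auto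
qed

lemma path_edges_nth_iff:
  assumes "distinct xs" "i < length xs" "j < length xs"
  shows "{xs ! i, xs ! j} \<in> {{xs ! t, xs ! (t + 1)} | t. t + 1 < length xs} \<longleftrightarrow> j = Suc i \<or> i = Suc j"
proof
  assume "{xs ! i, xs ! j} \<in> {{xs ! t, xs ! (t + 1)} | t. t + 1 < length xs}"
  then obtain t where t: "{xs ! i, xs ! j} = {xs ! t, xs ! (t + 1)}" "t + 1 < length xs" by blast
  then have "(i = t \<and> j = t + 1) \<or> (i = t + 1 \<and> j = t)"
    using assms by (auto simp: doubleton_eq_iff nth_eq_iff_index_eq)
  then show "j = Suc i \<or> i = Suc j" by auto
next
  assume "j = Suc i \<or> i = Suc j"
  then show "{xs ! i, xs ! j} \<in> {{xs ! t, xs ! (t + 1)} | t. t + 1 < length xs}"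
    using assms by (auto simp: insert_commute)
qed

text \<open>Cutting at z removes the edge {z - 1, z}; the components are the intervals between
  consecutive cut points.\<close>
definition cut_path :: "nat \<Rightarrow> nat set \<Rightarrow> nat set set" where
  "cut_path n Z = {{i, Suc i} | i. Suc i < n \<and> Suc i \<notin> Z}"

text \<open>Every component of cut_path n Z has at least d vertices.\<close>
definition separated_cuts :: "nat \<Rightarrow> nat \<Rightarrow> nat set \<Rightarrow> bool" where
  "separated_cuts d n Z \<longleftrightarrow> Z \<subseteq> {1..<n} \<and>
     (\<forall>z\<in>insert 0 (insert n Z). \<forall>z'\<in>insert 0 (insert n Z). z < z' \<longrightarrow> z + d \<le> z')"

lemma cut_path_edge_iff: "{x, y} \<in> cut_path n Z \<longleftrightarrow>
   (y = Suc x \<and> Suc x < n \<and> Suc x \<notin> Z) \<or> (x = Suc y \<and> Suc y < n \<and> Suc y \<notin> Z)"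
  unfolding cut_path_def by (auto simp: doubleton_eq_iff)

lemma graph_cut_path: "graph {0..<n} (cut_path n Z)"
  unfolding graph_def cut_path_def by auto

lemma card_cut_path:
  assumes "Z \<subseteq> {1..<n}"
  shows "card (cut_path n Z) = n - 1 - card Z"
proof -
  let ?A = "{i. Suc i < n \<and> Suc i \<notin> Z}"
  have "cut_path n Z = (\<lambda>i. {i, Suc i}) ` ?A" unfolding cut_path_def by auto
  moreover have "inj_on (\<lambda>i. {i, Suc i}) ?A"
    by (rule inj_onI) (auto simp: doubleton_eq_iff)
  moreover have "Suc ` ?A = {1..<n} - Z"
  proof (intro equalityI subsetI)
    fix w assume "w \<in> {1..<n} - Z"
    then have "w = Suc (w - 1)" "w - 1 \<in> ?A" by auto
    then show "w \<in> Suc ` ?A" by blast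
  qed auto
  then have "card ?A = card ({1..<n} - Z)"
    using card_image[of Suc ?A] by simp
  ultimately show ?thesis
    using assms by (simp add: card_image card_Diff_subset finite_subset)
qed

text \<open>Cuts of a path on 0, \<dots>, a - 1 followed by a disjoint copy of cut_path m Z shifted by a.\<close>
definition prepend_cuts :: "nat \<Rightarrow> nat \<Rightarrow> nat set \<Rightarrow> nat set" where
  "prepend_cuts a m Z = (if m = 0 then {} else insert a ((+) a ` Z))"

lemma mem_prepend_cuts: "w \<in> prepend_cuts a m Z \<longleftrightarrow> 0 < m \<and> (w = a \<or> a \<le> w \<and> w - a \<in> Z)"
  unfolding prepend_cuts_def by force

lemma separated_cuts_prepend:
  assumes "d \<le> a" "0 < a" "separated_cuts d m Z"
  shows "separated_cuts d (a + m) (prepend_cuts a m Z)"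
proof (cases "m = 0")
  case False
  have apart: "u + d \<le> v" if "u \<in> insert 0 (insert m Z)" "v \<in> insert 0 (insert m Z)" "u < v" for u v
    using assms(3) that unfolding separated_cuts_def by blast
  have ends: "insert 0 (insert (a + m) (prepend_cuts a m Z)) = insert 0 ((+) a ` insert 0 (insert m Z))"
    using False unfolding prepend_cuts_def by auto
  show ?thesis unfolding separated_cuts_def ends
  proof (intro conjI ballI impI)
    show "prepend_cuts a m Z \<subseteq> {1..<a + m}"
      using False assms unfolding separated_cuts_def prepend_cuts_def by auto
  next
    fix u v assume u: "u \<in> insert 0 ((+) a ` insert 0 (insert m Z))"
      and v: "v \<in> insert 0 ((+) a ` insert 0 (insert m Z))" and "u < v"
    then obtain v' where v': "v = a + v'" "v' \<in> insert 0 (insert m Z)" by auto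
    show "u + d \<le> v"
    proof (cases "u = 0")
      case False
      then obtain u' where "u = a + u'" "u' \<in> insert 0 (insert m Z)" using u by auto
      then show ?thesis using apart[of u' v'] v' \<open>u < v\<close> by simp
    qed (use v' assms(1) in simp)
  qed
qed (use assms(1) in \<open>auto simp: separated_cuts_def prepend_cuts_def\<close>)

lemma cut_path_prepend_edge_iff:
  "{i, j} \<in> cut_path (a + m) (prepend_cuts a m Z) \<longleftrightarrow>
     (i < a \<and> j < a \<and> (j = Suc i \<or> i = Suc j)) \<or>
     (a \<le> i \<and> a \<le> j \<and> {i - a, j - a} \<in> cut_path m Z)"
  unfolding cut_path_edge_iff mem_prepend_cuts by (auto simp: Suc_diff_le)

lemma graph_iso_cut_path_prepend_path:
  assumes xs: "distinct xs" "induced E (set xs) = {{xs ! i, xs ! (i + 1)} | i. i + 1 < length xs}"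
    and iso: "graph_iso {0..<m} (cut_path m Z) V' (induced E V')"
    and no_cross: "\<And>u v. u \<in> set xs \<Longrightarrow> v \<in> V' \<Longrightarrow> {u, v} \<notin> E"
    and disjoint: "set xs \<inter> V' = {}"
  shows "graph_iso {0..<length xs + m} (cut_path (length xs + m) (prepend_cuts (length xs) m Z))
           (set xs \<union> V') E"
proof -
  define a where "a = length xs"
  obtain g where g: "bij_betw g {0..<m} V'"
    and g_edges: "\<forall>i\<in>{0..<m}. \<forall>j\<in>{0..<m}. {i, j} \<in> cut_path m Z \<longleftrightarrow> {g i, g j} \<in> induced E V'"
    using iso unfolding graph_iso_def by blast
  define f where "f i = (if i < a then xs ! i else g (i - a))" for i
  have f_path: "bij_betw f {0..<a} (set xs)"
    using bij_betw_nth[OF xs(1)] unfolding a_def lessThan_atLeast0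
    by (rule bij_betw_cong[THEN iffD1, rotated]) (simp_all add: f_def a_def)
  have "bij_betw (\<lambda>i. i - a) {a..<a + m} {0..<m}"
    unfolding bij_betw_def by (auto simp: inj_on_def image_minus_const_atLeastLessThan_nat)
  then have f_rest: "bij_betw f {a..<a + m} V'"
    by (rule bij_betw_trans[OF _ g, THEN bij_betw_cong[THEN iffD1, rotated]]) (simp add: f_def)
  have "bij_betw f ({0..<a} \<union> {a..<a + m}) (set xs \<union> V')"
    using bij_betw_combine[OF f_path f_rest disjoint] .
  moreover have "{0..<a} \<union> {a..<a + m} = {0..<a + m}" by auto
  ultimately have f: "bij_betw f {0..<a + m} (set xs \<union> V')" by simp
  have "{i, j} \<in> cut_path (a + m) (prepend_cuts a m Z) \<longleftrightarrow> {f i, f j} \<in> E"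
    if "i < a + m" "j < a + m" for i j
  proof -
    consider "i < a" "j < a" | "i < a" "a \<le> j" | "a \<le> i" "j < a" | "a \<le> i" "a \<le> j" by linarith
    then show ?thesis
    proof cases
      case 1
      then have "{f i, f j} \<in> E \<longleftrightarrow> {xs ! i, xs ! j} \<in> induced E (set xs)"
        unfolding f_def a_def induced_def by simp
      also have "\<dots> \<longleftrightarrow> j = Suc i \<or> i = Suc j"
        unfolding xs(2) using 1 by (intro path_edges_nth_iff[OF xs(1)]) (auto simp: a_def)
      finally show ?thesis using 1 by (simp add: cut_path_prepend_edge_iff)
    next
      case 2
      then have "f i \<in> set xs" "f j \<in> V'"
        using bij_betw_apply[OF f_path] bij_betw_apply[OF f_rest] that by auto
      then have "{f i, f j} \<notin> E" by (rule no_cross)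
      then show ?thesis using 2 by (simp add: cut_path_prepend_edge_iff)
    next
      case 3
      then have "f j \<in> set xs" "f i \<in> V'"
        using bij_betw_apply[OF f_path] bij_betw_apply[OF f_rest] that by auto
      then have "{f j, f i} \<notin> E" by (rule no_cross)
      then show ?thesis using 3 by (simp add: cut_path_prepend_edge_iff insert_commute)
    next
      case 4
      then have "f i = g (i - a)" "f j = g (j - a)" "g (i - a) \<in> V'" "g (j - a) \<in> V'"
        using g that by (auto simp: f_def bij_betw_def)
      then have "{f i, f j} \<in> E \<longleftrightarrow> {i - a, j - a} \<in> cut_path m Z"
        using g_edges 4 that unfolding induced_def by auto
      then show ?thesis using 4 by (simp add: cut_path_prepend_edge_iff)
    qed
  qed
  then show ?thesis using f unfolding graph_iso_def a_def by auto
qed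

lemma linear_forest_iso_cut_path:
  assumes "linear_forest V E" "\<forall>x\<in>V. d \<le> card (component V E x)" "1 \<le> d"
  shows "\<exists>Z. separated_cuts d (card V) Z \<and> graph_iso {0..<card V} (cut_path (card V) Z) V E"
  using assms(1,2)
proof (induction "card V" arbitrary: V E rule: less_induct)
  case (less V E)
  have g: "graph V E" and fin: "finite V" using less.prems(1) unfolding linear_forest_def graph_def by auto
  show ?case
  proof (cases "V = {}")
    case True
    have "separated_cuts d 0 {}" unfolding separated_cuts_def by simp
    moreover have "graph_iso {0..<0} (cut_path 0 {}) V E"
      using True unfolding graph_iso_def by (auto intro!: exI[of _ "\<lambda>_. undefined"] simp: bij_betw_def)
    ultimately show ?thesis using True by auto
  next
    case False
    then obtain x where x: "x \<in> V" by blast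
    define C where "C = component V E x"
    define V' where "V' = V - C"
    obtain xs where xs: "distinct xs" "set xs = C"
        "induced E C = {{xs ! i, xs ! (i + 1)} | i. i + 1 < length xs}"
      using less.prems(1) x unfolding linear_forest_def is_path_def C_def by blast
    have "C \<subseteq> V" unfolding C_def by (rule component_subset)
    have len: "d \<le> length xs" "0 < length xs"
      using less.prems(2) x component_self[OF x] distinct_card[OF xs(1)] xs(2) assms(3)
      unfolding C_def by (auto intro!: Nat.gr0I)
    have card_V: "card V = length xs + card V'"
      using card_Diff_subset[OF finite_subset[OF \<open>C \<subseteq> V\<close> fin] \<open>C \<subseteq> V\<close>]
        card_mono[OF fin \<open>C \<subseteq> V\<close>] distinct_card[OF xs(1)] xs(2)
      unfolding V'_def by simp
    have "linear_forest V' (induced E V')"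
      unfolding V'_def C_def by (rule linear_forest_remove_component[OF less.prems(1)])
    moreover have "\<forall>y\<in>V'. d \<le> card (component V' (induced E V') y)"
      using less.prems(2) component_outside_component[OF g] unfolding V'_def C_def by auto
    moreover have "card V' < card V" using card_V len by simp
    ultimately obtain Z where Z: "separated_cuts d (card V') Z"
        "graph_iso {0..<card V'} (cut_path (card V') Z) V' (induced E V')"
      using less.hyps by blast
    have "{u, v} \<notin> E" if "u \<in> set xs" "v \<in> V'" for u v
      using edge_in_component_or_outside[OF g, of "{u, v}" x] that xs(2) unfolding V'_def C_def by auto
    from graph_iso_cut_path_prepend_path[OF xs(1) _ Z(2) this] 
    have "graph_iso {0..<card V} (cut_path (card V) (prepend_cuts (length xs) (card V') Z)) V E"
      using xs(2,3) \<open>C \<subseteq> V\<close> card_V unfolding V'_def by (simp add: Un_absorb1 Int_Diff)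
    moreover have "separated_cuts d (card V) (prepend_cuts (length xs) (card V') Z)"
      using separated_cuts_prepend[OF len Z(1)] card_V by simp
    ultimately show ?thesis by blast
  qed
qed

definition reflect_window :: "nat \<Rightarrow> nat \<Rightarrow> nat \<Rightarrow> nat" where
  "reflect_window p r x = (if p < x + r \<and> x < p + r then 2 * p - x else x)"

lemma reflect_window_involution: "r \<le> Suc p \<Longrightarrow> reflect_window p r (reflect_window p r x) = x"
  unfolding reflect_window_def by auto

lemma inj_reflect_window: "r \<le> Suc p \<Longrightarrow> inj (reflect_window p r)"
  by (rule injI) (metis reflect_window_involution)

lemma mem_image_reflect_window:
  assumes "r \<le> Suc p"
  shows "x \<in> reflect_window p r ` T \<longleftrightarrow> reflect_window p r x \<in> T"
  using reflect_window_involution[OF assms]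
  by (metis (no_types, lifting) image_iff)

definition free_at_distance :: "nat \<Rightarrow> nat set \<Rightarrow> nat \<Rightarrow> bool" where
  "free_at_distance p T s \<longleftrightarrow> (s \<le> p \<longrightarrow> p - s \<notin> T) \<and> p + s \<notin> T"

definition free_radius :: "nat \<Rightarrow> nat set \<Rightarrow> nat" where
  "free_radius p T = (LEAST s. 0 < s \<and> free_at_distance p T s)"

lemma ex_free_at_distance:
  assumes "finite T" "p \<in> T" "card T \<le> Suc d"
  shows "\<exists>s. 0 < s \<and> s \<le> Suc d \<and> free_at_distance p T s"
proof (rule ccontr)
  assume "\<not> ?thesis"
  then have occupied: "\<not> free_at_distance p T s" if "s \<in> {1..Suc d}" for s
    using that by auto
  define h where "h s = (if s \<le> p \<and> p - s \<in> T then p - s else p + s)" for s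
  have "inj_on h {1..Suc d}"
    unfolding inj_on_def h_def by auto
  moreover have "h ` {1..Suc d} \<subseteq> T - {p}"
  proof
    fix x assume "x \<in> h ` {1..Suc d}"
    then obtain s where s: "s \<in> {1..Suc d}" "x = h s" by blast
    then show "x \<in> T - {p}"
      using occupied[OF s(1)] unfolding h_def free_at_distance_def by auto
  qed
  ultimately have "card {1..Suc d} \<le> card (T - {p})"
    using assms(1) by (intro card_inj_on_le) auto
  then show False using assms by simp
qed

lemma free_radius_spec:
  assumes "finite T" "p \<in> T" "card T \<le> Suc d"
  shows "0 < free_radius p T" "free_radius p T \<le> Suc d" "free_at_distance p T (free_radius p T)"
    "\<And>s. 0 < s \<Longrightarrow> s < free_radius p T \<Longrightarrow> \<not> free_at_distance p T s"
proof -
  obtain s where s: "0 < s" "s \<le> Suc d" "free_at_distance p T s"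
    using ex_free_at_distance[OF assms] by blast
  have "0 < free_radius p T \<and> free_at_distance p T (free_radius p T)"
    unfolding free_radius_def by (rule LeastI[of _ s]) (use s in auto)
  then show "0 < free_radius p T" "free_at_distance p T (free_radius p T)" by auto
  have "free_radius p T \<le> s" unfolding free_radius_def by (rule Least_le) (use s in auto)
  then show "free_radius p T \<le> Suc d" using s by simp
  show "\<And>s. 0 < s \<Longrightarrow> s < free_radius p T \<Longrightarrow> \<not> free_at_distance p T s"
    unfolding free_radius_def using not_less_Least by blast
qed

lemma free_at_distance_reflect_window:
  assumes r: "r \<le> Suc p" and s: "0 < s" "s \<le> r" and free: "free_at_distance p T r"
  shows "free_at_distance p (reflect_window p r ` T) s \<longleftrightarrow> free_at_distance p T s"
proof (cases "s = r")
  case True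
  have "reflect_window p r (p + r) = p + r" "r \<le> p \<Longrightarrow> reflect_window p r (p - r) = p - r"
    unfolding reflect_window_def by auto
  then show ?thesis using True mem_image_reflect_window[OF r] unfolding free_at_distance_def by metis
next
  case False
  then have "reflect_window p r (p + s) = p - s" "reflect_window p r (p - s) = p + s" "s \<le> p"
    using s r unfolding reflect_window_def by auto
  then show ?thesis unfolding free_at_distance_def using mem_image_reflect_window[OF r] by metis
qed

lemma free_radius_reflect_window:
  assumes "finite T" "p \<in> T" "card T \<le> Suc d" "d \<le> p"
  shows "free_radius p (reflect_window p (free_radius p T) ` T) = free_radius p T"
  unfolding free_radius_def[of p "reflect_window p (free_radius p T) ` T"]
proof (rule Least_equality)
  note r = free_radius_spec[OF assms(1-3)]
  have r_le: "free_radius p T \<le> Suc p" using r(2) assms(4) by simp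
  show "0 < free_radius p T \<and> free_at_distance p (reflect_window p (free_radius p T) ` T) (free_radius p T)"
    using free_at_distance_reflect_window[OF r_le r(1) order.refl r(3)] r(1,3) by simp
  show "free_radius p T \<le> s"
    if "0 < s \<and> free_at_distance p (reflect_window p (free_radius p T) ` T) s" for s
    using that r(4)[of s] free_at_distance_reflect_window[OF r_le _ _ r(3), of s] by force
qed

text \<open>The cut Suc p is moved to p; no other cut is within distance d of p.\<close>
locale cut_shift =
  fixes d k n p :: nat and Y :: "nat set"
  assumes k_le: "k \<le> Suc d"
    and separated_p: "separated_cuts d n (insert p Y)"
    and separated_Suc_p: "separated_cuts d n (insert (Suc p) Y)"
    and p_notin: "p \<notin> Y" and Suc_p_notin: "Suc p \<notin> Y"
begin

lemma d_le_p: "d \<le> p" and Suc_p_add_d_le: "Suc p + d \<le> n"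
  using separated_p separated_Suc_p unfolding separated_cuts_def by auto

lemma cuts_far_from_p: "y \<in> Y \<Longrightarrow> y + d \<le> p \<or> Suc p + d \<le> y"
proof -
  assume y: "y \<in> Y"
  then have "y \<noteq> p" "y \<noteq> Suc p" using p_notin Suc_p_notin by auto
  then show ?thesis using separated_p separated_Suc_p y unfolding separated_cuts_def
    by (metis insert_iff linorder_neqE_nat not_less_eq)
qed

lemma notin_cuts_near_p: "p < v + d \<Longrightarrow> v \<le> p + d \<Longrightarrow> v \<notin> Y"
  using cuts_far_from_p by fastforce

definition k_subsets :: "nat set set" where
  "k_subsets = {T. T \<subseteq> {0..<n} \<and> card T = k}"

text \<open>The reflection leaves free_radius unchanged, so this is an involution.\<close>
definition window_swap :: "nat set \<Rightarrow> nat set" where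
  "window_swap T = (if p \<in> T then reflect_window p (free_radius p T) ` T else T)"

lemma k_subsetsD: assumes "T \<in> k_subsets" shows "finite T" "card T \<le> Suc d" "T \<subseteq> {0..<n}"
  using assms k_le unfolding k_subsets_def by (auto intro: finite_subset)

lemma cut_path_edge_near_p:
  assumes "q = p \<or> q = Suc p"
    and "p < x + Suc d" "x < p + Suc d" "p < y + Suc d" "y < p + Suc d"
  shows "{x, y} \<in> cut_path n (insert q Y) \<longleftrightarrow> (y = Suc x \<and> Suc x \<noteq> q) \<or> (x = Suc y \<and> Suc y \<noteq> q)"
  using assms Suc_p_add_d_le notin_cuts_near_p[of "Suc x"] notin_cuts_near_p[of "Suc y"]
  unfolding cut_path_edge_iff by auto

lemma cut_path_edge_reflect_window:
  assumes T: "T \<in> k_subsets" "p \<in> T" and xy: "x \<in> T" "y \<in> T"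
  defines "\<rho> \<equiv> reflect_window p (free_radius p T)"
  shows "{x, y} \<in> cut_path n (insert p Y) \<longleftrightarrow> {\<rho> x, \<rho> y} \<in> cut_path n (insert (Suc p) Y)"
proof -
  define r where "r = free_radius p T"
  have r: "0 < r" "r \<le> Suc d" "free_at_distance p T r"
    using free_radius_spec[OF k_subsetsD(1)[OF T(1)] T(2) k_subsetsD(2)[OF T(1)]] unfolding r_def by auto
  have \<rho>: "\<rho> z = (if p < z + r \<and> z < p + r then 2 * p - z else z)" for z
    unfolding \<rho>_def r_def reflect_window_def ..
  have near_or_far: "(p < z + r \<and> z < p + r) \<or> z + r < p \<or> p + r < z" if "z \<in> T" for z
  proof (rule ccontr)
    assume "\<not> ?thesis"
    then have "z = p - r \<and> r \<le> p \<or> z = p + r" by auto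
    then show False using r(3) that unfolding free_at_distance_def by auto
  qed
  show ?thesis
  proof (cases "(p < x + r \<and> x < p + r) \<and> (p < y + r \<and> y < p + r)")
    case True
    have "{x, y} \<in> cut_path n (insert p Y) \<longleftrightarrow> (y = Suc x \<and> Suc x \<noteq> p) \<or> (x = Suc y \<and> Suc y \<noteq> p)"
      by (rule cut_path_edge_near_p) (use True r in auto)
    also have "\<dots> \<longleftrightarrow> (2 * p - y = Suc (2 * p - x) \<and> Suc (2 * p - x) \<noteq> Suc p) \<or>
        (2 * p - x = Suc (2 * p - y) \<and> Suc (2 * p - y) \<noteq> Suc p)"
      using True r d_le_p by auto
    also have "\<dots> \<longleftrightarrow> {2 * p - x, 2 * p - y} \<in> cut_path n (insert (Suc p) Y)"
      by (rule cut_path_edge_near_p[symmetric]) (use True r d_le_p in auto)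
    finally show ?thesis using True by (simp add: \<rho>)
  next
    case False
    then consider "p < x + r \<and> x < p + r" "y + r < p \<or> p + r < y"
      | "x + r < p \<or> p + r < x" "p < y + r \<and> y < p + r"
      | "x + r < p \<or> p + r < x" "y + r < p \<or> p + r < y"
      using near_or_far[OF xy(1)] near_or_far[OF xy(2)] by blast
    then show ?thesis
    proof cases
      case 1
      then have "\<rho> x = 2 * p - x" "\<rho> y = y" by (auto simp: \<rho>)
      moreover have "{x, y} \<notin> cut_path n (insert p Y)" "{2 * p - x, y} \<notin> cut_path n (insert (Suc p) Y)"
        using 1 unfolding cut_path_edge_iff by auto
      ultimately show ?thesis by simp
    next
      case 2
      then have "\<rho> x = x" "\<rho> y = 2 * p - y" by (auto simp: \<rho>)
      moreover have "{x, y} \<notin> cut_path n (insert p Y)" "{x, 2 * p - y} \<notin> cut_path n (insert (Suc p) Y)"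
        using 2 unfolding cut_path_edge_iff by auto
      ultimately show ?thesis by simp
    next
      case 3
      then have "\<rho> x = x" "\<rho> y = y" by (auto simp: \<rho>)
      moreover have "{x, y} \<in> cut_path n (insert p Y) \<longleftrightarrow> {x, y} \<in> cut_path n (insert (Suc p) Y)"
        using 3 r(1) unfolding cut_path_edge_iff by auto
      ultimately show ?thesis by simp
    qed
  qed
qed

lemma window_swap_involution:
  assumes "T \<in> k_subsets" shows "window_swap (window_swap T) = T"
proof (cases "p \<in> T")
  case True
  note r = free_radius_spec[OF k_subsetsD(1)[OF assms] True k_subsetsD(2)[OF assms]]
  let ?\<rho> = "reflect_window p (free_radius p T)"
  have r_le: "free_radius p T \<le> Suc p" using r(2) d_le_p by simp
  have "?\<rho> p = p" unfolding reflect_window_def by simp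
  then have "p \<in> ?\<rho> ` T" using True by (metis imageI)
  then have "window_swap (window_swap T) = ?\<rho> ` ?\<rho> ` T"
    using True free_radius_reflect_window[OF k_subsetsD(1)[OF assms] True k_subsetsD(2)[OF assms] d_le_p]
    unfolding window_swap_def by simp
  also have "\<dots> = T" using reflect_window_involution[OF r_le] by (simp add: image_comp)
  finally show ?thesis .
qed (simp add: window_swap_def)

lemma window_swap_k_subsets:
  assumes "T \<in> k_subsets" shows "window_swap T \<in> k_subsets"
proof (cases "p \<in> T")
  case True
  note r = free_radius_spec[OF k_subsetsD(1)[OF assms] True k_subsetsD(2)[OF assms]]
  let ?\<rho> = "reflect_window p (free_radius p T)"
  have r_le: "free_radius p T \<le> Suc p" using r(2) d_le_p by simp
  have "card (?\<rho> ` T) = card T"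
    using inj_reflect_window[OF r_le] by (simp add: card_image inj_on_subset)
  moreover have "?\<rho> ` T \<subseteq> {0..<n}"
  proof
    fix y assume "y \<in> ?\<rho> ` T"
    then obtain x where x: "x \<in> T" "y = ?\<rho> x" by blast
    have "x < n" using x k_subsetsD(3)[OF assms] by auto
    then show "y \<in> {0..<n}" using x Suc_p_add_d_le r(2) unfolding reflect_window_def by auto
  qed
  ultimately show ?thesis using assms True unfolding window_swap_def k_subsets_def by auto
qed (simp add: window_swap_def assms)

lemma graph_iso_window_swap:
  assumes T: "T \<in> k_subsets"
  shows "graph_iso T (induced (cut_path n (insert p Y)) T)
           (window_swap T) (induced (cut_path n (insert (Suc p) Y)) (window_swap T))"
proof (cases "p \<in> T")
  case True
  note r = free_radius_spec[OF k_subsetsD(1)[OF T] True k_subsetsD(2)[OF T]]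
  have r_le: "free_radius p T \<le> Suc p" using r(2) d_le_p by simp
  have "inj_on (reflect_window p (free_radius p T)) T"
    using inj_on_subset[OF inj_reflect_window[OF r_le] subset_UNIV] .
  then have "graph_iso T (induced (cut_path n (insert p Y)) T)
      (reflect_window p (free_radius p T) ` T)
      (induced (cut_path n (insert (Suc p) Y)) (reflect_window p (free_radius p T) ` T))"
    by (rule graph_iso_induced_image) (simp add: cut_path_edge_reflect_window[OF T True])
  then show ?thesis using True unfolding window_swap_def by simp
next
  case False
  have "{x, y} \<in> cut_path n (insert p Y) \<longleftrightarrow> {x, y} \<in> cut_path n (insert (Suc p) Y)"
    if "x \<in> T" "y \<in> T" for x y
    using False that unfolding cut_path_edge_iff by auto
  then have "graph_iso T (induced (cut_path n (insert p Y)) T)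
      (id ` T) (induced (cut_path n (insert (Suc p) Y)) (id ` T))"
    by (intro graph_iso_induced_image) auto
  then show ?thesis using False unfolding window_swap_def by simp
qed

lemma deck_shift_cut:
  "deck k {0..<n} (cut_path n (insert p Y)) = deck k {0..<n} (cut_path n (insert (Suc p) Y))"
proof (rule deck_eq_if_bij_betw_subsets)
  show "bij_betw window_swap {S. S \<subseteq> {0..<n} \<and> card S = k} {T. T \<subseteq> {0..<n} \<and> card T = k}"
    using window_swap_involution window_swap_k_subsets
    by (intro bij_betw_byWitness[where f' = window_swap]) (auto simp: k_subsets_def)
qed (use graph_iso_window_swap in \<open>auto simp: k_subsets_def\<close>)

end

definition packed_cuts :: "nat \<Rightarrow> nat \<Rightarrow> nat set" where
  "packed_cuts d c = (\<lambda>i. d * i) ` {1..c}"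

lemma eq_atLeastAtMost_card_if_down_closed:
  assumes "finite I" "0 \<notin> I" and down: "\<And>i. i \<in> I \<Longrightarrow> 2 \<le> i \<Longrightarrow> i - 1 \<in> I"
  shows "I = {1..card I}"
proof (cases "I = {}")
  case False
  define m where "m = Max I"
  have "m \<in> I" using False assms(1) unfolding m_def by simp
  have "I \<subseteq> {1..m}"
  proof
    fix i assume "i \<in> I"
    moreover have "i \<noteq> 0" using \<open>i \<in> I\<close> assms(2) by (intro notI) simp
    ultimately show "i \<in> {1..m}" using assms(1) unfolding m_def by auto
  qed
  moreover have "{1..m} \<subseteq> I"
  proof
    fix j assume "j \<in> {1..m}"
    then have "1 \<le> j" "j \<le> m" by auto
    from this(2) show "j \<in> I"
    proof (induction rule: inc_induct)
      case (step i)
      have "Suc i - 1 \<in> I" by (rule down) (use step \<open>1 \<le> j\<close> in auto)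
      then show ?case by simp
    qed (rule \<open>m \<in> I\<close>)
  qed
  ultimately have "I = {1..m}" by (rule equalityI)
  then show ?thesis by simp
qed simp

lemma dvd_if_left_closed_cuts:
  assumes "1 \<le> d" "separated_cuts d n Z" and closed: "\<forall>z\<in>Z. z - d \<in> insert 0 Z"
  shows "z \<in> Z \<Longrightarrow> d dvd z"
proof (induction z rule: less_induct)
  case (less z)
  have "d \<le> z" using less.prems assms(2) unfolding separated_cuts_def by force
  show ?case
  proof (cases "z = d")
    case False
    then have "z - d \<in> Z" "z - d < z" using closed less.prems \<open>d \<le> z\<close> assms(1) by auto
    then have "d dvd (z - d) + d" using less.IH by simp
    then show ?thesis using \<open>d \<le> z\<close> by simp
  qed simp
qed

lemma packed_cuts_if_left_closed:
  assumes d: "1 \<le> d" and sep: "separated_cuts d n Z" and closed: "\<forall>z\<in>Z. z - d \<in> insert 0 Z"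
  shows "Z = packed_cuts d (card Z)"
proof -
  define I where "I = {i. d * i \<in> Z}"
  have Z_sub: "Z \<subseteq> {1..<n}" using sep unfolding separated_cuts_def by simp
  have Z_eq: "Z = (\<lambda>i. d * i) ` I"
  proof (intro equalityI subsetI)
    fix z assume "z \<in> Z"
    moreover obtain i where "z = d * i" using dvd_if_left_closed_cuts[OF assms \<open>z \<in> Z\<close>] ..
    ultimately show "z \<in> (\<lambda>i. d * i) ` I" unfolding I_def by blast
  qed (auto simp: I_def)
  have "I \<subseteq> {..n}"
  proof
    fix i assume "i \<in> I"
    then have "d * i < n" using Z_sub unfolding I_def by auto
    moreover have "i \<le> d * i" using d by simp
    ultimately have "i \<le> n" by linarith
    then show "i \<in> {..n}" by simp
  qed
  then have "finite I" by (rule finite_subset) simp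
  moreover have "0 \<notin> I" using Z_sub unfolding I_def by auto
  moreover have "i - 1 \<in> I" if "i \<in> I" "2 \<le> i" for i
  proof -
    have "d * i - d \<in> insert 0 Z" using closed that(1) unfolding I_def by auto
    moreover have "d * i - d = d * (i - 1)" by (simp add: right_diff_distrib')
    moreover have "d * (i - 1) \<noteq> 0" using d that(2) by simp
    ultimately show "i - 1 \<in> I" unfolding I_def by simp
  qed
  ultimately have "I = {1..card I}" by (rule eq_atLeastAtMost_card_if_down_closed)
  moreover have "card Z = card I"
    using Z_eq d by (simp add: card_image inj_on_def)
  ultimately show ?thesis using Z_eq unfolding packed_cuts_def by simp
qed

lemma separated_cuts_shift_left:
  assumes d: "1 \<le> d" and sep: "separated_cuts d n Z" and z: "z \<in> Z" "z - d \<notin> insert 0 Z"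
  shows "separated_cuts d n (insert (z - 1) (Z - {z}))"
  unfolding separated_cuts_def
proof (intro conjI ballI impI)
  have apart: "a + d \<le> b" if "a \<in> insert 0 (insert n Z)" "b \<in> insert 0 (insert n Z)" "a < b" for a b
    using sep that unfolding separated_cuts_def by blast
  have z_range: "1 \<le> z" "z < n" "d < z"
    using z sep apart[of 0 z] unfolding separated_cuts_def by auto
  show "insert (z - 1) (Z - {z}) \<subseteq> {1..<n}"
    using sep z_range d unfolding separated_cuts_def by auto
  have below: "w + d \<le> z - 1" if "w \<in> insert 0 (insert n Z)" "w < z" for w
  proof -
    have "w + d \<le> z" using apart[of w z] that z(1) by simp
    moreover have "w \<noteq> z - d" using that z(2) z_range by auto
    ultimately show ?thesis by simp
  qed
  fix a b assume a: "a \<in> insert 0 (insert n (insert (z - 1) (Z - {z})))"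
    and b: "b \<in> insert 0 (insert n (insert (z - 1) (Z - {z})))" and "a < b"
  show "a + d \<le> b"
  proof (cases "a = z - 1")
    case True
    then have "b \<in> insert 0 (insert n Z)" "z \<le> b" "b \<noteq> z" using b \<open>a < b\<close> z_range by auto
    then have "z + d \<le> b" using apart[of z b] z(1) by simp
    then show ?thesis using True by simp
  next
    case False
    then have a': "a \<in> insert 0 (insert n Z)" using a by auto
    show ?thesis
    proof (cases "b = z - 1")
      case True
      then show ?thesis using below[OF a'] \<open>a < b\<close> z_range by simp
    next
      case False
      then show ?thesis using apart[OF a'] b \<open>a < b\<close> by auto
    qed
  qed
qed

lemma deck_cut_path_eq_packed:
  assumes d: "1 \<le> d" "k \<le> Suc d"
  shows "separated_cuts d n Z \<Longrightarrow>
    deck k {0..<n} (cut_path n Z) = deck k {0..<n} (cut_path n (packed_cuts d (card Z)))"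
proof (induction "\<Sum>Z" arbitrary: Z rule: less_induct)
  case (less Z)
  show ?case
  proof (cases "\<forall>z\<in>Z. z - d \<in> insert 0 Z")
    case True
    then show ?thesis using packed_cuts_if_left_closed[OF d(1) less.prems] by simp
  next
    case False
    then obtain z where z: "z \<in> Z" "z - d \<notin> insert 0 Z" by blast
    define Y where "Y = Z - {z}"
    have fin: "finite Z" and z_pos: "0 < z"
      using less.prems z(1) unfolding separated_cuts_def by (auto intro: finite_subset)
    have Z_eq: "Z = insert (Suc (z - 1)) Y" using z(1) z_pos unfolding Y_def by auto
    have sep': "separated_cuts d n (insert (z - 1) Y)"
      unfolding Y_def by (rule separated_cuts_shift_left[OF d(1) less.prems z])
    have "z - 1 \<notin> Y"
    proof
      assume "z - 1 \<in> Y"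
      then have "z - 1 \<in> insert 0 (insert n Z)" "z - 1 < z" using z_pos unfolding Y_def by auto
      then have "z - 1 + d \<le> z" using less.prems z(1) unfolding separated_cuts_def by blast
      then have "d = 1" using d(1) z_pos by linarith
      then show False using z(2) \<open>z - 1 \<in> Y\<close> unfolding Y_def by simp
    qed
    have "separated_cuts d n (insert (Suc (z - 1)) Y)" using less.prems Z_eq by simp
    moreover have "Suc (z - 1) \<notin> Y" using z_pos unfolding Y_def by simp
    ultimately interpret cut_shift d k n "z - 1" Y
      using cut_shift.intro[OF d(2) sep'] \<open>z - 1 \<notin> Y\<close> by blast
    have card_eq: "card (insert (z - 1) Y) = card Z"
      using fin \<open>z - 1 \<notin> Y\<close> card_Suc_Diff1[OF fin z(1)] unfolding Y_def by simp
    have "\<Sum>(insert (z - 1) Y) < \<Sum>Z"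
      using fin z(1) z_pos \<open>z - 1 \<notin> Y\<close> unfolding Y_def by (simp add: sum.remove)
    from less.hyps[OF this sep'] have "deck k {0..<n} (cut_path n (insert (z - 1) Y)) =
        deck k {0..<n} (cut_path n (packed_cuts d (card Z)))"
      using card_eq by simp
    then show ?thesis using deck_shift_cut Z_eq by simp
  qed
qed

lemma card_component_ge_1: "finite V \<Longrightarrow> x \<in> V \<Longrightarrow> 1 \<le> card (component V E x)"
  using component_self component_subset
  by (metis One_nat_def Suc_leI card_gt_0_iff empty_iff finite_subset)

lemma card_cuts_iso_cut_path:
  assumes "graph V E" "separated_cuts d n Z" "graph_iso {0..<n} (cut_path n Z) V E"
  shows "card Z = n - 1 - card E"
proof -
  have "Z \<subseteq> {1..<n}" using assms(2) unfolding separated_cuts_def by simp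
  then have "card Z \<le> n - 1" "card E = n - 1 - card Z"
    using card_mono[of "{1..<n}" Z] card_cut_path graph_iso_card_edges[OF graph_cut_path assms(1,3)]
    by auto
  then show ?thesis by simp
qed

theorem corollary2p5:
  fixes k :: nat and V :: "'a set" and E :: "'a set set" and V' :: "'b set" and E' :: "'b set set"
  assumes "k > 0"
    and "linear_forest V E" and "linear_forest V' E'"
    and "card V = card V'" and "card E = card E'"
    and "\<forall>x\<in>V. card (component V E x) \<ge> k - 1"
    and "\<forall>x\<in>V'. card (component V' E' x) \<ge> k - 1"
  shows "deck k V E = deck k V' E'"
proof -
  define d where "d = max (k - 1) 1"
  have d: "1 \<le> d" "k \<le> Suc d" unfolding d_def by auto
  have g: "graph V E" "graph V' E'" using assms(2,3) unfolding linear_forest_def by auto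
  then have "\<forall>x\<in>V. d \<le> card (component V E x)" "\<forall>x\<in>V'. d \<le> card (component V' E' x)"
    using assms(6,7) card_component_ge_1 unfolding d_def graph_def by auto
  then obtain Z Z' where
      Z: "separated_cuts d (card V) Z" "graph_iso {0..<card V} (cut_path (card V) Z) V E" and
      Z': "separated_cuts d (card V) Z'" "graph_iso {0..<card V} (cut_path (card V) Z') V' E'"
    using linear_forest_iso_cut_path[OF assms(2) _ d(1)] linear_forest_iso_cut_path[OF assms(3) _ d(1)]
      assms(4) by metis
  have "card Z = card Z'"
    using card_cuts_iso_cut_path[OF g(1) Z] card_cuts_iso_cut_path[OF g(2) Z'] assms(5) by simp
  then show ?thesis
    using deck_eq_if_graph_iso[OF Z(2)] deck_eq_if_graph_iso[OF Z'(2)]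
      deck_cut_path_eq_packed[OF d Z(1)] deck_cut_path_eq_packed[OF d Z'(1)] by simp
qed

end
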